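(* Let $\xi$ be a real random variable such that either $\mathbb{E}\xi^2=\infty$, or $\mathbb{E}\xi^2<\infty$ and $\mathbb{E}\xi\neq0$. Let $\varepsilon\in(0,1)$ and $M>0$. Then there exists $n_0$, depending only on $\varepsilon$, $M$ and the distribution of $\xi$, such that for every $n>n_0$ the following holds: if $A$ is an $n\times n$ random matrix whose entries are i.i.d. copies of $\xi$, then with probability at least $1-e^{-n}$, every submatrix $A'=(A_{ij})_{i\in I,j\in J}$ of $A$ with $I,J\subset[n]$, $|I|\ge(1-\varepsilon)n$ and $|J|\ge(1-\varepsilon)n$ satisfies $\|A'\|\ge M\sqrt n$.
   Context: $\|\cdot\|$ denotes the operator norm (Euclidean norm to Euclidean norm). *)

theory Defs
  imports "HOL-Probability.Probability"
begin

text \<open>Vectors are functions nat => real,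
  only the coordinates in J matter.\<close>
definition submatrix_opnorm :: "(nat \<times> nat \<Rightarrow> real) \<Rightarrow> nat set \<Rightarrow> nat set \<Rightarrow> real" where
  "submatrix_opnorm a I J =
     (SUP x \<in> {x :: nat \<Rightarrow> real. (\<Sum>j\<in>J. (x j)\<^sup>2) = 1}.
        sqrt (\<Sum>i\<in>I. (\<Sum>j\<in>J. a (i, j) * x j)\<^sup>2))"

definition iid_matrix :: "real measure \<Rightarrow> nat \<Rightarrow> (nat \<times> nat \<Rightarrow> real) measure" where
  "iid_matrix \<mu> n = PiM ({..<n} \<times> {..<n}) (\<lambda>_. \<mu>)"

end

theory Submission
  imports Defs "HOL-Real_Asymp.Real_Asymp"
begin

text \<open>
  For a submatrix with index sets I, J the operator norm dominates every column norm and
  |sum of the entries| / sqrt(|I| |J|). There are at most 4^n pairs (I, J), so every estimate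
  on a fixed block only has to fail with probability e^{-c n^2}, which Hoeffding's inequality
  provides for bounded functions of the entries.

  If E xi^2 is infinite, min(xi^2, T) has mean above K^2 / (1 - eps) + 1 for large T; hence on
  every large block the squared entries sum to at least K^2 / (1 - eps) |I| |J|, and some column
  has norm at least K sqrt n.

  If E xi^2 is finite and m = E xi is nonzero, split each entry x into its truncation at a large
  level T, the part T < |x| < K sqrt n, and the part |x| >= K sqrt n. Entries of the last kind
  give the bound directly. The truncated entries sum to about m |I| |J| on every large block
  (Hoeffding), and the middle parts have total sum o(n^2) except with probability
  e^{-c n^(3/2)} (a Chernoff bound whose exponential moment is controlled by E xi^2). So the
  sum over the block is of order m n^2 and the norm is of order m n, beyond K sqrt n.
\<close>

section \<open>Operator norms of submatrices\<close>

definition submatrix_mult_norm :: "(nat \<times> nat \<Rightarrow> real) \<Rightarrow> nat set \<Rightarrow> nat set \<Rightarrow> (nat \<Rightarrow> real) \<Rightarrow> real" where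
  "submatrix_mult_norm a I J x = L2_set (\<lambda>i. \<Sum>j\<in>J. a (i, j) * x j) I"

definition submatrix_frobenius :: "(nat \<times> nat \<Rightarrow> real) \<Rightarrow> nat set \<Rightarrow> nat set \<Rightarrow> real" where
  "submatrix_frobenius a I J = L2_set (\<lambda>i. L2_set (\<lambda>j. a (i, j)) J) I"

lemma submatrix_opnorm_eq_SUP:
  "submatrix_opnorm a I J = (SUP x \<in> {x. L2_set x J = 1}. submatrix_mult_norm a I J x)"
proof -
  have "{x :: nat \<Rightarrow> real. (\<Sum>j\<in>J. (x j)\<^sup>2) = 1} = {x. L2_set x J = 1}"
    by (auto simp: L2_set_def)
  then show ?thesis unfolding submatrix_opnorm_def submatrix_mult_norm_def L2_set_def by simp
qed

lemma submatrix_mult_norm_nonneg: "0 \<le> submatrix_mult_norm a I J x"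
  by (simp add: submatrix_mult_norm_def)

lemma submatrix_frobenius_nonneg: "0 \<le> submatrix_frobenius a I J"
  by (simp add: submatrix_frobenius_def)

lemma submatrix_mult_norm_le_frobenius:
  assumes "finite J"
  shows "submatrix_mult_norm a I J x \<le> submatrix_frobenius a I J * L2_set x J"
proof -
  have row: "\<bar>\<Sum>j\<in>J. a (i, j) * x j\<bar> \<le> L2_set (\<lambda>j. a (i, j)) J * L2_set x J" for i
  proof -
    have "\<bar>\<Sum>j\<in>J. a (i, j) * x j\<bar> \<le> (\<Sum>j\<in>J. \<bar>a (i, j)\<bar> * \<bar>x j\<bar>)"
      by (rule order_trans[OF sum_abs]) (simp add: abs_mult)
    also have "\<dots> \<le> L2_set (\<lambda>j. a (i, j)) J * L2_set x J" by (rule L2_set_mult_ineq)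
    finally show ?thesis .
  qed
  have "submatrix_mult_norm a I J x = L2_set (\<lambda>i. \<bar>\<Sum>j\<in>J. a (i, j) * x j\<bar>) I"
    unfolding submatrix_mult_norm_def L2_set_def by simp
  also have "\<dots> \<le> L2_set (\<lambda>i. L2_set (\<lambda>j. a (i, j)) J * L2_set x J) I"
    using row by (simp add: L2_set_mono)
  also have "\<dots> = submatrix_frobenius a I J * L2_set x J"
    unfolding submatrix_frobenius_def by (simp add: L2_set_left_distrib)
  finally show ?thesis .
qed

lemma submatrix_mult_norm_le_opnorm:
  assumes "finite J" "L2_set x J = 1"
  shows "submatrix_mult_norm a I J x \<le> submatrix_opnorm a I J"
proof -
  have "bdd_above (submatrix_mult_norm a I J ` {x. L2_set x J = 1})"
    using submatrix_mult_norm_le_frobenius[OF assms(1), of a I]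
    by (intro bdd_aboveI[of _ "submatrix_frobenius a I J"]) (metis (mono_tags) image_iff mem_Collect_eq mult_1_right)
  then show ?thesis
    unfolding submatrix_opnorm_eq_SUP using assms(2) by (intro cSUP_upper) auto
qed

lemma L2_set_normalized_constant:
  assumes "finite J" "J \<noteq> {}"
  shows "L2_set (\<lambda>_. 1 / sqrt (real (card J))) J = 1"
  using assms by (simp add: L2_set_constant)

lemma submatrix_opnorm_nonneg:
  assumes "finite J" "J \<noteq> {}"
  shows "0 \<le> submatrix_opnorm a I J"
  using submatrix_mult_norm_le_opnorm[OF assms(1) L2_set_normalized_constant[OF assms]]
    submatrix_mult_norm_nonneg
  by (rule order_trans[rotated])

lemma column_L2_le_submatrix_opnorm:
  assumes "finite J" "j \<in> J"
  shows "L2_set (\<lambda>i. a (i, j)) I \<le> submatrix_opnorm a I J"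
proof -
  define x where "x = (\<lambda>k. if k = j then 1 else (0::real))"
  have "(\<Sum>k\<in>J. a (i, k) * x k) = a (i, j)" for i
    using assms by (simp add: x_def if_distrib cong: if_cong)
  moreover have "L2_set x J = 1"
  proof -
    have "(\<Sum>k\<in>J. (x k)\<^sup>2) = (\<Sum>k\<in>J. if k = j then 1 else 0)"
      by (intro sum.cong) (auto simp: x_def)
    then show ?thesis using assms by (simp add: L2_set_def)
  qed
  ultimately show ?thesis
    using submatrix_mult_norm_le_opnorm[OF assms(1), of x a I] by (simp add: submatrix_mult_norm_def)
qed

lemma abs_entry_le_submatrix_opnorm:
  assumes "finite I" "finite J" "i \<in> I" "j \<in> J"
  shows "\<bar>a (i, j)\<bar> \<le> submatrix_opnorm a I J"
proof -
  have "\<bar>a (i, j)\<bar> \<le> L2_set (\<lambda>i. \<bar>a (i, j)\<bar>) I" by (rule member_le_L2_set) (use assms in auto)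
  also have "\<dots> = L2_set (\<lambda>i. a (i, j)) I" by (simp add: L2_set_def)
  also have "\<dots> \<le> submatrix_opnorm a I J" by (rule column_L2_le_submatrix_opnorm) (use assms in auto)
  finally show ?thesis .
qed

lemma sum_squares_le_card_mult_submatrix_opnorm:
  assumes "finite I" "finite J"
  shows "(\<Sum>d\<in>I \<times> J. (a d)\<^sup>2) \<le> real (card J) * (submatrix_opnorm a I J)\<^sup>2"
proof -
  have col: "(\<Sum>i\<in>I. (a (i, j))\<^sup>2) \<le> (submatrix_opnorm a I J)\<^sup>2" if "j \<in> J" for j
  proof -
    have "(L2_set (\<lambda>i. a (i, j)) I)\<^sup>2 \<le> (submatrix_opnorm a I J)\<^sup>2"
      using column_L2_le_submatrix_opnorm[OF assms(2) that] by (intro power_mono) auto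
    then show ?thesis by (simp add: L2_set_def sum_nonneg)
  qed
  have "(\<Sum>d\<in>I \<times> J. (a d)\<^sup>2) = (\<Sum>i\<in>I. \<Sum>j\<in>J. (a (i, j))\<^sup>2)"
    by (simp add: sum.cartesian_product)
  also have "\<dots> = (\<Sum>j\<in>J. \<Sum>i\<in>I. (a (i, j))\<^sup>2)" by (rule sum.swap)
  also have "\<dots> \<le> (\<Sum>j\<in>J. (submatrix_opnorm a I J)\<^sup>2)" by (intro sum_mono col)
  finally show ?thesis by simp
qed

lemma submatrix_opnorm_ge_of_sum_squares:
  assumes "finite I" "finite J" "J \<noteq> {}"
    and "c * real (card I) * real (card J) \<le> (\<Sum>d\<in>I \<times> J. (a d)\<^sup>2)"
  shows "sqrt (c * real (card I)) \<le> submatrix_opnorm a I J"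
proof -
  have "real (card J) * (c * real (card I)) \<le> real (card J) * (submatrix_opnorm a I J)\<^sup>2"
    using assms(4) sum_squares_le_card_mult_submatrix_opnorm[OF assms(1,2), of a] by (simp add: mult_ac)
  moreover have "real (card J) > 0" using assms(2,3) by (simp add: card_gt_0_iff)
  ultimately have "c * real (card I) \<le> (submatrix_opnorm a I J)\<^sup>2"
    by (rule mult_left_le_imp_le)
  then have "sqrt (c * real (card I)) \<le> sqrt ((submatrix_opnorm a I J)\<^sup>2)"
    by (rule real_sqrt_le_mono)
  then show ?thesis using submatrix_opnorm_nonneg[OF assms(2,3)] by simp
qed

lemma abs_sum_entries_le_submatrix_opnorm:
  assumes "finite I" "finite J" "J \<noteq> {}"
  shows "\<bar>\<Sum>d\<in>I \<times> J. a d\<bar> \<le> submatrix_opnorm a I J * sqrt (real (card I) * real (card J))"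
proof -
  define c where "c = 1 / sqrt (real (card J))"
  have cJ: "card J > 0" using assms by auto
  have "L2_set (\<lambda>_. c) J = 1" using L2_set_normalized_constant[OF assms(2,3)] by (simp add: c_def)
  then have le: "submatrix_mult_norm a I J (\<lambda>_. c) \<le> submatrix_opnorm a I J"
    using assms by (intro submatrix_mult_norm_le_opnorm) auto
  have "c * \<bar>\<Sum>d\<in>I \<times> J. a d\<bar> = \<bar>\<Sum>i\<in>I. (\<Sum>j\<in>J. a (i, j) * c) * 1\<bar>"
    by (simp add: c_def abs_mult sum.cartesian_product sum_divide_distrib[symmetric])
  also have "\<dots> \<le> (\<Sum>i\<in>I. \<bar>\<Sum>j\<in>J. a (i, j) * c\<bar> * \<bar>1\<bar>)"
    by (simp add: sum_abs)
  also have "\<dots> \<le> submatrix_mult_norm a I J (\<lambda>_. c) * L2_set (\<lambda>_. 1::real) I"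
    unfolding submatrix_mult_norm_def by (rule L2_set_mult_ineq)
  also have "\<dots> \<le> submatrix_opnorm a I J * sqrt (real (card I))"
    using le by (simp add: L2_set_constant mult_right_mono)
  finally have "\<bar>\<Sum>d\<in>I \<times> J. a d\<bar> \<le> submatrix_opnorm a I J * sqrt (real (card I)) * sqrt (real (card J))"
    using cJ by (simp add: c_def field_simps)
  then show ?thesis by (simp add: real_sqrt_mult mult.assoc)
qed

lemma submatrix_opnorm_ge_of_abs_sum:
  assumes "I \<subseteq> {..<n}" "J \<subseteq> {..<n}" "J \<noteq> {}" "c * (real n)\<^sup>2 \<le> \<bar>\<Sum>d\<in>I \<times> J. a d\<bar>"
  shows "c * real n \<le> submatrix_opnorm a I J"
proof -
  have fin: "finite I" "finite J" using assms(1,2) by (auto intro: finite_subset)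
  have n: "n > 0" using assms(2,3) by auto
  have "card I \<le> n" "card J \<le> n" using assms(1,2) card_mono[of "{..<n}"] by auto
  then have "sqrt (real (card I) * real (card J)) \<le> sqrt (real n * real n)"
    by (intro real_sqrt_le_mono mult_mono) auto
  then have "\<bar>\<Sum>d\<in>I \<times> J. a d\<bar> \<le> submatrix_opnorm a I J * sqrt (real n * real n)"
    using abs_sum_entries_le_submatrix_opnorm[OF fin assms(3), of a]
      mult_left_mono[OF _ submatrix_opnorm_nonneg[OF fin(2) assms(3), of a I]]
    by (meson order_trans)
  then have "\<bar>\<Sum>d\<in>I \<times> J. a d\<bar> \<le> submatrix_opnorm a I J * real n" by simp
  then have "c * real n * real n \<le> submatrix_opnorm a I J * real n"
    using assms(4) by (simp add: power2_eq_square mult_ac)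
  then show ?thesis using n by simp
qed

section \<open>Measurability of the operator norm\<close>

definition rational_vectors :: "nat set \<Rightarrow> (nat \<Rightarrow> real) set" where
  "rational_vectors J = (\<lambda>r j. if j \<in> J then r j else 0) ` (PiE J (\<lambda>_. \<rat>))"

text \<open>For \<open>L2_set y J = 0\<close> the ratio is 0, as division by zero yields zero.\<close>

definition submatrix_norm_ratio :: "(nat \<times> nat \<Rightarrow> real) \<Rightarrow> nat set \<Rightarrow> nat set \<Rightarrow> (nat \<Rightarrow> real) \<Rightarrow> real" where
  "submatrix_norm_ratio a I J y = submatrix_mult_norm a I J y / L2_set y J"

lemma countable_rational_vectors: "finite J \<Longrightarrow> countable (rational_vectors J)"
  unfolding rational_vectors_def by (intro countable_image countable_PiE countable_rat)

lemma rational_vectors_nonempty: "rational_vectors J \<noteq> {}"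
proof -
  have "(\<lambda>j\<in>J. 0::real) \<in> PiE J (\<lambda>_. \<rat>)" by auto
  then show ?thesis unfolding rational_vectors_def by blast
qed

lemma exists_rational_vector_close:
  assumes "finite J" "\<rho> > 0"
  shows "\<exists>y\<in>rational_vectors J. L2_set (\<lambda>j. x j - y j) J \<le> \<rho>"
proof -
  define r where "r = \<rho> / (real (card J) + 1)"
  have r: "r > 0" using assms by (simp add: r_def)
  have "\<forall>j. \<exists>q. q \<in> \<rat> \<and> \<bar>x j - q\<bar> < r"
  proof
    fix j
    obtain q where "q \<in> \<rat>" "x j - r < q" "q < x j + r"
      using Rats_dense_in_real[of "x j - r" "x j + r"] r by auto
    then show "\<exists>q. q \<in> \<rat> \<and> \<bar>x j - q\<bar> < r" by (intro exI[of _ q]) auto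
  qed
  then obtain q where q: "\<And>j. q j \<in> \<rat>" "\<And>j. \<bar>x j - q j\<bar> < r" by metis
  define y where "y = (\<lambda>j. if j \<in> J then q j else 0)"
  have "y \<in> rational_vectors J"
    unfolding rational_vectors_def y_def by (rule image_eqI[of _ _ "restrict q J"]) (auto simp: q(1))
  moreover have "L2_set (\<lambda>j. x j - y j) J \<le> \<rho>"
  proof -
    have "L2_set (\<lambda>j. x j - y j) J \<le> (\<Sum>j\<in>J. \<bar>x j - y j\<bar>)" by (rule L2_set_le_sum_abs)
    also have "\<dots> \<le> (\<Sum>j\<in>J. r)" by (intro sum_mono) (auto simp: y_def less_imp_le q(2))
    also have "\<dots> \<le> \<rho>" using assms r by (simp add: r_def field_simps)
    finally show ?thesis .
  qed
  ultimately show ?thesis by blast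
qed

lemma submatrix_mult_norm_le_add_diff:
  assumes "finite J"
  shows "submatrix_mult_norm a I J x
           \<le> submatrix_mult_norm a I J y + submatrix_frobenius a I J * L2_set (\<lambda>j. x j - y j) J"
proof -
  have "(\<Sum>j\<in>J. a (i, j) * x j) = (\<Sum>j\<in>J. a (i, j) * y j) + (\<Sum>j\<in>J. a (i, j) * (x j - y j))" for i
    by (simp add: sum.distrib[symmetric] algebra_simps)
  then have "submatrix_mult_norm a I J x \<le> submatrix_mult_norm a I J y + submatrix_mult_norm a I J (\<lambda>j. x j - y j)"
    unfolding submatrix_mult_norm_def by (simp add: L2_set_triangle_ineq)
  then show ?thesis using submatrix_mult_norm_le_frobenius[OF assms, of a I "\<lambda>j. x j - y j"] by linarith
qed

lemma submatrix_norm_ratio_le_opnorm: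
  assumes "finite J" "J \<noteq> {}"
  shows "submatrix_norm_ratio a I J y \<le> submatrix_opnorm a I J"
proof (cases "L2_set y J = 0")
  case True
  then show ?thesis
    using submatrix_opnorm_nonneg[OF assms] by (simp add: submatrix_norm_ratio_def)
next
  case False
  then have pos: "L2_set y J > 0" using L2_set_nonneg[of y J] by linarith
  define x where "x = (\<lambda>j. y j / L2_set y J)"
  have "L2_set x J = 1"
    using pos L2_set_left_distrib[of "1 / L2_set y J" y J] by (simp add: x_def)
  moreover have "submatrix_mult_norm a I J x = submatrix_norm_ratio a I J y"
    using pos L2_set_left_distrib[of "1 / L2_set y J" "\<lambda>i. \<Sum>j\<in>J. a (i, j) * y j" I]
    by (simp add: x_def submatrix_mult_norm_def submatrix_norm_ratio_def sum_divide_distrib)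
  ultimately show ?thesis using submatrix_mult_norm_le_opnorm[OF assms(1)] by metis
qed

lemma submatrix_mult_norm_le_ratio_of_close:
  assumes "finite J" "L2_set x J = 1" and xy: "L2_set (\<lambda>j. x j - y j) J \<le> \<rho>"
    and \<rho>: "0 < \<rho>" "\<rho> \<le> 1/2" and F\<rho>: "2 * submatrix_frobenius a I J * \<rho> \<le> e"
  shows "submatrix_mult_norm a I J x - e \<le> submatrix_norm_ratio a I J y"
proof -
  define G where "G = submatrix_mult_norm a I J x"
  define F where "F = submatrix_frobenius a I J"
  have GF: "G \<le> F" using submatrix_mult_norm_le_frobenius[OF assms(1), of a I x] assms(2) by (simp add: G_def F_def)
  have F0: "F \<ge> 0" by (simp add: F_def submatrix_frobenius_nonneg)
  have "0 \<le> 2 * F * \<rho>" using F0 \<rho> by simp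
  then have e: "e \<ge> 0" using F\<rho>[folded F_def] by linarith
  have yx: "L2_set (\<lambda>j. y j - x j) J \<le> \<rho>"
    using xy by (simp add: L2_set_def power2_commute)
  have Gy: "G - F * \<rho> \<le> submatrix_mult_norm a I J y"
    using submatrix_mult_norm_le_add_diff[OF assms(1), of a I x y] mult_left_mono[OF xy F0]
    by (simp add: G_def F_def)
  have Ly: "1 - \<rho> \<le> L2_set y J" "L2_set y J \<le> 1 + \<rho>"
    using L2_set_triangle_ineq[of y "\<lambda>j. x j - y j" J] L2_set_triangle_ineq[of x "\<lambda>j. y j - x j" J]
      assms(2) xy yx by simp_all
  show ?thesis
  proof (cases "G - F * \<rho> \<ge> 0")
    case True
    have "G * \<rho> \<le> F * \<rho>" "0 \<le> e * \<rho>" using GF \<rho> e by (simp_all add: mult_right_mono)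
    then have "(G - e) * (1 + \<rho>) \<le> G - F * \<rho>" using F\<rho> by (simp add: F_def algebra_simps)
    then have "G - e \<le> (G - F * \<rho>) / (1 + \<rho>)" using \<rho> by (simp add: field_simps)
    also have "\<dots> \<le> (G - F * \<rho>) / L2_set y J"
      using True Ly \<rho> by (intro divide_left_mono) auto
    also have "\<dots> \<le> submatrix_norm_ratio a I J y"
      unfolding submatrix_norm_ratio_def using Gy by (intro divide_right_mono) auto
    finally show ?thesis by (simp add: G_def)
  next
    case False
    moreover have "0 \<le> F * \<rho>" using F0 \<rho> by simp
    ultimately have "G - e \<le> 0" using F\<rho>[folded F_def] by linarith
    also have "0 \<le> submatrix_norm_ratio a I J y"
      by (simp add: submatrix_norm_ratio_def submatrix_mult_norm_nonneg)
    finally show ?thesis by (simp add: G_def)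
  qed
qed

lemma submatrix_mult_norm_approx_rational:
  assumes "finite J" "L2_set x J = 1" "e > 0"
  shows "\<exists>y\<in>rational_vectors J. submatrix_mult_norm a I J x - e \<le> submatrix_norm_ratio a I J y"
proof -
  define F where "F = submatrix_frobenius a I J"
  have F0: "F \<ge> 0" by (simp add: F_def submatrix_frobenius_nonneg)
  define \<rho> where "\<rho> = min (1/2) (e / (2 * F + 1))"
  have \<rho>: "0 < \<rho>" "\<rho> \<le> 1/2" using assms(3) F0 by (auto simp: \<rho>_def min_def)
  have "2 * F * \<rho> \<le> 2 * F * (e / (2 * F + 1))" using F0 by (intro mult_left_mono) (auto simp: \<rho>_def)
  also have "\<dots> \<le> e" using F0 assms(3) by (simp add: field_simps)
  finally have "2 * F * \<rho> \<le> e" .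
  obtain y where y: "y \<in> rational_vectors J" "L2_set (\<lambda>j. x j - y j) J \<le> \<rho>"
    using exists_rational_vector_close[OF assms(1) \<rho>(1)] by blast
  show ?thesis
    using submatrix_mult_norm_le_ratio_of_close[OF assms(1,2) y(2) \<rho> \<open>2 * F * \<rho> \<le> e\<close>[unfolded F_def]] y(1)
    by blast
qed

lemma submatrix_opnorm_eq_SUP_rational:
  assumes "finite J" "J \<noteq> {}"
  shows "submatrix_opnorm a I J = (SUP y\<in>rational_vectors J. submatrix_norm_ratio a I J y)"
proof (rule antisym)
  have bdd: "bdd_above (submatrix_norm_ratio a I J ` rational_vectors J)"
    using submatrix_norm_ratio_le_opnorm[OF assms] by (intro bdd_aboveI) auto
  show "(SUP y\<in>rational_vectors J. submatrix_norm_ratio a I J y) \<le> submatrix_opnorm a I J"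
    using rational_vectors_nonempty submatrix_norm_ratio_le_opnorm[OF assms] by (intro cSUP_least) auto
  show "submatrix_opnorm a I J \<le> (SUP y\<in>rational_vectors J. submatrix_norm_ratio a I J y)"
    unfolding submatrix_opnorm_eq_SUP
  proof (rule cSUP_least)
    show "{x. L2_set x J = 1} \<noteq> {}" using L2_set_normalized_constant[OF assms] by auto
    fix x assume x: "x \<in> {x. L2_set x J = 1}"
    show "submatrix_mult_norm a I J x \<le> (SUP y\<in>rational_vectors J. submatrix_norm_ratio a I J y)"
    proof (rule field_le_epsilon)
      fix e :: real assume "e > 0"
      then obtain y where "y \<in> rational_vectors J" "submatrix_mult_norm a I J x - e \<le> submatrix_norm_ratio a I J y"
        using submatrix_mult_norm_approx_rational[OF assms(1)] x by blast
      then show "submatrix_mult_norm a I J x \<le> (SUP y\<in>rational_vectors J. submatrix_norm_ratio a I J y) + e"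
        using cSUP_upper[OF _ bdd] by fastforce
    qed
  qed
qed

lemma borel_measurable_submatrix_opnorm:
  assumes "finite I" "finite J" and entries: "\<And>i j. i \<in> I \<Longrightarrow> j \<in> J \<Longrightarrow> (\<lambda>a. a (i, j)) \<in> borel_measurable N"
  shows "(\<lambda>a. submatrix_opnorm a I J) \<in> borel_measurable N"
proof (cases "J = {}")
  case True
  then show ?thesis by (simp add: submatrix_opnorm_def)
next
  case False
  have "(\<lambda>a. submatrix_mult_norm a I J y) \<in> borel_measurable N" for y
  proof -
    have "(\<lambda>a. \<Sum>i\<in>I. (\<Sum>j\<in>J. a (i, j) * y j)\<^sup>2) \<in> borel_measurable N"
      by (intro borel_measurable_sum borel_measurable_power borel_measurable_times
          borel_measurable_const entries)
    from measurable_compose[OF this borel_measurable_sqrt] show ?thesis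
      by (simp add: submatrix_mult_norm_def L2_set_def o_def)
  qed
  then have "(\<lambda>a. submatrix_norm_ratio a I J y) \<in> borel_measurable N" for y
    unfolding submatrix_norm_ratio_def by measurable
  moreover have "bdd_above ((\<lambda>y. submatrix_norm_ratio a I J y) ` rational_vectors J)" for a
    using submatrix_norm_ratio_le_opnorm[OF assms(2) False] by (intro bdd_aboveI) auto
  ultimately show ?thesis
    unfolding submatrix_opnorm_eq_SUP_rational[OF assms(2) False]
    by (intro borel_measurable_cSUP countable_rational_vectors assms(2))
qed

definition large_index_pairs :: "real \<Rightarrow> nat \<Rightarrow> (nat set \<times> nat set) set" where
  "large_index_pairs \<epsilon> n = {(I, J). I \<subseteq> {..<n} \<and> J \<subseteq> {..<n} \<and>
     (1 - \<epsilon>) * real n \<le> real (card I) \<and> (1 - \<epsilon>) * real n \<le> real (card J)}"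

definition large_blocks :: "real \<Rightarrow> nat \<Rightarrow> (nat \<times> nat) set set" where
  "large_blocks \<epsilon> n = (\<lambda>(I, J). I \<times> J) ` large_index_pairs \<epsilon> n"

definition large_submatrices_norm_ge :: "real \<Rightarrow> nat \<Rightarrow> real \<Rightarrow> (nat \<times> nat \<Rightarrow> real) \<Rightarrow> bool" where
  "large_submatrices_norm_ge \<epsilon> n c a \<longleftrightarrow>
     (\<forall>I J. I \<subseteq> {..<n} \<and> J \<subseteq> {..<n} \<and>
        real (card I) \<ge> (1 - \<epsilon>) * real n \<and> real (card J) \<ge> (1 - \<epsilon>) * real n
        \<longrightarrow> submatrix_opnorm a I J \<ge> c)"

lemma large_index_pairs_subset: "large_index_pairs \<epsilon> n \<subseteq> Pow {..<n} \<times> Pow {..<n}"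
  by (auto simp: large_index_pairs_def)

lemma finite_large_index_pairs: "finite (large_index_pairs \<epsilon> n)"
  by (rule finite_subset[OF large_index_pairs_subset]) auto

lemma finite_large_blocks: "finite (large_blocks \<epsilon> n)"
  by (simp add: large_blocks_def finite_large_index_pairs)

lemma card_large_blocks_le: "real (card (large_blocks \<epsilon> n)) \<le> 4 ^ n"
proof -
  have "card (large_blocks \<epsilon> n) \<le> card (large_index_pairs \<epsilon> n)"
    unfolding large_blocks_def by (rule card_image_le[OF finite_large_index_pairs])
  also have "\<dots> \<le> card (Pow {..<n} \<times> Pow {..<n})"
    by (intro card_mono large_index_pairs_subset) auto
  also have "\<dots> = 4 ^ n" by (simp add: card_cartesian_product card_Pow flip: power_mult_distrib)
  finally show ?thesis by (metis of_nat_le_iff of_nat_numeral of_nat_power)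
qed

lemma large_block_subset: "E \<in> large_blocks \<epsilon> n \<Longrightarrow> E \<subseteq> {..<n} \<times> {..<n}"
  by (auto simp: large_blocks_def large_index_pairs_def)

lemma card_large_block_ge:
  assumes "E \<in> large_blocks \<epsilon> n" "\<epsilon> < 1"
  shows "(1 - \<epsilon>)\<^sup>2 * (real n)\<^sup>2 \<le> real (card E)"
proof -
  obtain I J where E: "E = I \<times> J" and IJ: "(I, J) \<in> large_index_pairs \<epsilon> n"
    using assms(1) by (auto simp: large_blocks_def)
  then have "(1 - \<epsilon>) * real n * ((1 - \<epsilon>) * real n) \<le> real (card I) * real (card J)"
    using assms(2) by (intro mult_mono) (auto simp: large_index_pairs_def)
  then show ?thesis by (simp add: E card_cartesian_product power2_eq_square mult_ac)
qed

lemma nonempty_large_index_pair: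
  assumes "(1 - \<epsilon>) * real n \<le> real (card J)" "\<epsilon> < 1" "n > 0"
  shows "J \<noteq> {}"
proof -
  have "0 < (1 - \<epsilon>) * real n" using assms(2,3) by simp
  then show ?thesis using assms(1) by auto
qed

lemma large_submatrices_norm_ge_of_sum_squares:
  assumes "0 < n" "\<epsilon> < 1" "0 \<le> K"
    and sq: "\<And>E. E \<in> large_blocks \<epsilon> n \<Longrightarrow> K\<^sup>2 / (1 - \<epsilon>) * real (card E) \<le> (\<Sum>d\<in>E. (a d)\<^sup>2)"
  shows "large_submatrices_norm_ge \<epsilon> n (K * sqrt n) a"
  unfolding large_submatrices_norm_ge_def
proof (intro allI impI, elim conjE)
  fix I J assume IJ: "I \<subseteq> {..<n}" "J \<subseteq> {..<n}" "(1 - \<epsilon>) * real n \<le> real (card I)" "(1 - \<epsilon>) * real n \<le> real (card J)"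
  then have "I \<times> J \<in> large_blocks \<epsilon> n" by (auto simp: large_blocks_def large_index_pairs_def)
  from sq[OF this] have "K\<^sup>2 / (1 - \<epsilon>) * real (card I) * real (card J) \<le> (\<Sum>d\<in>I \<times> J. (a d)\<^sup>2)"
    by (simp add: card_cartesian_product mult_ac)
  then have "sqrt (K\<^sup>2 / (1 - \<epsilon>) * real (card I)) \<le> submatrix_opnorm a I J"
    using IJ assms(1,2) by (intro submatrix_opnorm_ge_of_sum_squares nonempty_large_index_pair[of \<epsilon> n])
      (auto intro: finite_subset)
  moreover have "K\<^sup>2 * real n \<le> K\<^sup>2 / (1 - \<epsilon>) * real (card I)"
    using IJ(3) assms(2) mult_left_mono[OF IJ(3), of "K\<^sup>2 / (1 - \<epsilon>)"] by simp
  then have "K * sqrt n \<le> sqrt (K\<^sup>2 / (1 - \<epsilon>) * real (card I))"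
    using real_sqrt_le_mono assms(3) by (fastforce simp: real_sqrt_mult)
  ultimately show "K * sqrt n \<le> submatrix_opnorm a I J" by linarith
qed

definition truncation :: "real \<Rightarrow> real \<Rightarrow> real" where
  "truncation T x = (if \<bar>x\<bar> \<le> T then x else 0)"

definition midrange_abs :: "real \<Rightarrow> real \<Rightarrow> real \<Rightarrow> real" where
  "midrange_abs T L x = (if T < \<bar>x\<bar> \<and> \<bar>x\<bar> < L then \<bar>x\<bar> else 0)"

lemma borel_measurable_truncation: "truncation T \<in> borel_measurable borel"
  unfolding truncation_def by measurable

lemma borel_measurable_midrange_abs: "midrange_abs T L \<in> borel_measurable borel"
  unfolding midrange_abs_def by measurable

lemma midrange_abs_nonneg: "0 \<le> midrange_abs T L x"
  by (simp add: midrange_abs_def)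

lemma abs_le_square_div:
  fixes T x :: real
  assumes "T > 0" "T \<le> \<bar>x\<bar>"
  shows "\<bar>x\<bar> \<le> x\<^sup>2 / T"
proof -
  have "T * \<bar>x\<bar> \<le> \<bar>x\<bar> * \<bar>x\<bar>" by (intro mult_right_mono) (use assms(2) in auto)
  then show ?thesis using assms(1) by (simp add: field_simps power2_eq_square abs_mult_self_eq)
qed

lemma midrange_abs_le_square_div: "T > 0 \<Longrightarrow> midrange_abs T L x \<le> x\<^sup>2 / T"
  by (auto simp: midrange_abs_def intro: abs_le_square_div)

lemma abs_diff_truncation_le_square_div: "T > 0 \<Longrightarrow> \<bar>x - truncation T x\<bar> \<le> x\<^sup>2 / T"
  by (auto simp: truncation_def intro: abs_le_square_div)

lemma abs_diff_truncation_le_midrange_abs: "\<bar>x\<bar> < L \<Longrightarrow> \<bar>x - truncation T x\<bar> \<le> midrange_abs T L x"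
  by (auto simp: truncation_def midrange_abs_def)

lemma abs_sum_ge_of_truncation:
  assumes E: "E \<subseteq> {..<n} \<times> {..<n}" "(1 - \<epsilon>)\<^sup>2 * (real n)\<^sup>2 \<le> real (card E)"
    and "0 < \<delta>" and mT: "4 * \<delta> \<le> \<bar>mT\<bar> * (1 - \<epsilon>)\<^sup>2" and small: "\<And>d. d \<in> E \<Longrightarrow> \<bar>a d\<bar> < L"
    and trunc: "\<bar>(\<Sum>d\<in>E. truncation T (a d)) - real (card E) * mT\<bar> < \<delta> * real (card E)"
    and mid: "(\<Sum>d\<in>{..<n} \<times> {..<n}. midrange_abs T L (a d)) < \<delta> * (real n)\<^sup>2"
  shows "2 * \<delta> * (real n)\<^sup>2 \<le> \<bar>\<Sum>d\<in>E. a d\<bar>"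
proof -
  have "real (card E) \<le> (real n)\<^sup>2"
    using card_mono[OF _ E(1)] by (auto simp: power2_eq_square simp flip: of_nat_mult)
  have "\<bar>(\<Sum>d\<in>E. a d) - (\<Sum>d\<in>E. truncation T (a d))\<bar> \<le> (\<Sum>d\<in>E. \<bar>a d - truncation T (a d)\<bar>)"
    by (simp add: sum_subtractf[symmetric] sum_abs)
  also have "\<dots> \<le> (\<Sum>d\<in>E. midrange_abs T L (a d))"
    using small by (intro sum_mono abs_diff_truncation_le_midrange_abs) auto
  also have "\<dots> \<le> (\<Sum>d\<in>{..<n} \<times> {..<n}. midrange_abs T L (a d))"
    using E(1) by (intro sum_mono2) (auto simp: midrange_abs_nonneg)
  finally have "\<bar>(\<Sum>d\<in>E. a d) - (\<Sum>d\<in>E. truncation T (a d))\<bar> < \<delta> * (real n)\<^sup>2"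
    using mid by linarith
  moreover have "\<bar>(\<Sum>d\<in>E. truncation T (a d)) - real (card E) * mT\<bar> < \<delta> * (real n)\<^sup>2"
    using trunc mult_left_mono[OF \<open>real (card E) \<le> (real n)\<^sup>2\<close>, of \<delta>] \<open>0 < \<delta>\<close> by linarith
  moreover have "4 * \<delta> * (real n)\<^sup>2 \<le> \<bar>mT\<bar> * real (card E)"
    using mult_right_mono[OF mT, of "(real n)\<^sup>2"] mult_left_mono[OF E(2), of "\<bar>mT\<bar>"]
    by (simp add: mult_ac)
  moreover have "\<bar>real (card E) * mT\<bar> \<le> \<bar>\<Sum>d\<in>E. a d\<bar> + \<bar>(\<Sum>d\<in>E. a d) - (\<Sum>d\<in>E. truncation T (a d))\<bar>
      + \<bar>(\<Sum>d\<in>E. truncation T (a d)) - real (card E) * mT\<bar>"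
    by linarith
  ultimately show ?thesis by (simp add: abs_mult mult.commute)
qed

lemma large_submatrices_norm_ge_of_truncation:
  assumes "0 < n" "\<epsilon> < 1" "0 < \<delta>" and mT: "4 * \<delta> \<le> \<bar>mT\<bar> * (1 - \<epsilon>)\<^sup>2" and K: "K \<le> 2 * \<delta> * sqrt n"
    and trunc: "\<And>E. E \<in> large_blocks \<epsilon> n \<Longrightarrow>
      \<bar>(\<Sum>d\<in>E. truncation T (a d)) - real (card E) * mT\<bar> < \<delta> * real (card E)"
    and mid: "(\<Sum>d\<in>{..<n} \<times> {..<n}. midrange_abs T (K * sqrt n) (a d)) < \<delta> * (real n)\<^sup>2"
  shows "large_submatrices_norm_ge \<epsilon> n (K * sqrt n) a"
  unfolding large_submatrices_norm_ge_def
proof (intro allI impI, elim conjE)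
  fix I J assume IJ: "I \<subseteq> {..<n}" "J \<subseteq> {..<n}" "(1 - \<epsilon>) * real n \<le> real (card I)" "(1 - \<epsilon>) * real n \<le> real (card J)"
  then have E: "I \<times> J \<in> large_blocks \<epsilon> n" by (auto simp: large_blocks_def large_index_pairs_def)
  have fin: "finite I" "finite J" using IJ by (auto intro: finite_subset)
  show "K * sqrt n \<le> submatrix_opnorm a I J"
  proof (cases "\<exists>d\<in>I \<times> J. K * sqrt n \<le> \<bar>a d\<bar>")
    case True
    then obtain i j where "i \<in> I" "j \<in> J" "K * sqrt n \<le> \<bar>a (i, j)\<bar>" by auto
    with abs_entry_le_submatrix_opnorm[OF fin this(1,2), where a=a] show ?thesis by linarith
  next
    case False
    then have "2 * \<delta> * (real n)\<^sup>2 \<le> \<bar>\<Sum>d\<in>I \<times> J. a d\<bar>"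
      using large_block_subset[OF E] card_large_block_ge[OF E assms(2)] assms(3) mT trunc[OF E] mid
      by (intro abs_sum_ge_of_truncation) (auto simp: not_le)
    then have "2 * \<delta> * real n \<le> submatrix_opnorm a I J"
      by (rule submatrix_opnorm_ge_of_abs_sum[OF IJ(1,2) nonempty_large_index_pair[OF IJ(4) assms(2,1)]])
    moreover have "K * sqrt n \<le> 2 * \<delta> * real n"
      using mult_right_mono[OF K, of "sqrt n"] by (simp add: mult.assoc)
    ultimately show ?thesis by linarith
  qed
qed

section \<open>Matrices with i.i.d. entries\<close>

context real_distribution
begin

abbreviation iid :: "'d set \<Rightarrow> ('d \<Rightarrow> real) measure" where
  "iid D \<equiv> PiM D (\<lambda>_. M)"

lemma prob_space_iid: "prob_space (iid D)"
  by (intro prob_space_PiM prob_space_axioms)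

lemma borel_measurable_iid_coordinate: "d \<in> D \<Longrightarrow> (\<lambda>a. a d) \<in> borel_measurable (iid D)"
  using measurable_component_singleton[of d D "\<lambda>_. M"] by simp

lemma borel_measurable_iid_sum:
  fixes f :: "real \<Rightarrow> real"
  assumes "E \<subseteq> D" "f \<in> borel_measurable borel"
  shows "(\<lambda>a. \<Sum>d\<in>E. f (a d)) \<in> borel_measurable (iid D)"
  using assms by (intro borel_measurable_sum measurable_compose[OF borel_measurable_iid_coordinate]) auto

lemma indep_vars_iid_coordinates: "prob_space.indep_vars (iid D) (\<lambda>_. M) (\<lambda>d a. a d) D"
proof -
  interpret P: prob_space "iid D" by (rule prob_space_iid)
  show ?thesis
  proof (cases "D = {}")
    case True
    then show ?thesis unfolding P.indep_vars_def P.indep_sets_def by simp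
  next
    case False
    have "distr (iid D) (iid D) (\<lambda>x. restrict x D) = distr (iid D) (iid D) (\<lambda>x. x)"
      by (intro distr_cong) (auto simp: space_PiM)
    also have "\<dots> = PiM D (\<lambda>d. distr (iid D) M (\<lambda>x. x d))"
      by (auto intro!: PiM_cong distr_PiM_component[symmetric] prob_space_axioms)
    finally show ?thesis
      using False by (subst P.indep_vars_iff_distr_eq_PiM') (auto intro: measurable_component_singleton)
  qed
qed

lemma distr_iid_coordinate: "d \<in> D \<Longrightarrow> distr (iid D) M (\<lambda>a. a d) = M"
  by (rule distr_PiM_component) (auto intro: prob_space_axioms)

lemma nn_integral_iid_coordinate:
  assumes "d \<in> D" "h \<in> borel_measurable borel"
  shows "(\<integral>\<^sup>+a. h (a d) \<partial>iid D) = (\<integral>\<^sup>+x. h x \<partial>M)"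
  using nn_integral_distr[OF measurable_component_singleton[OF assms(1), of "\<lambda>_. M"], of h] assms
  by (simp add: distr_iid_coordinate)

lemma integral_iid_coordinate:
  fixes h :: "real \<Rightarrow> real"
  assumes "d \<in> D" "h \<in> borel_measurable borel"
  shows "(\<integral>a. h (a d) \<partial>iid D) = (\<integral>x. h x \<partial>M)"
  using integral_distr[OF measurable_component_singleton[OF assms(1), of "\<lambda>_. M"], of h] assms
  by (simp add: distr_iid_coordinate)

lemma chernoff_iid_sum:
  assumes E: "E \<subseteq> D" "finite E" and f: "f \<in> borel_measurable borel" and l: "l > 0"
    and mgf: "(\<integral>\<^sup>+x. ennreal (exp (l * f x)) \<partial>M) \<le> ennreal B"
  shows "measure (iid D) {a \<in> space (iid D). t \<le> (\<Sum>d\<in>E. f (a d))} \<le> exp (- l * t) * B ^ card E"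
proof -
  interpret P: prob_space "iid D" by (rule prob_space_iid)
  have "0 < (\<integral>\<^sup>+x. ennreal (exp (l * f x)) \<partial>M)"
    using f by (subst zero_less_iff_neq_zero, subst nn_integral_0_iff_AE) auto
  then have B: "B \<ge> 0" using mgf by (metis ennreal_neg leD linorder_le_cases)
  have "emeasure (iid D) {a \<in> space (iid D). t \<le> (\<Sum>d\<in>E. f (a d))}
        \<le> ennreal (exp (- l * t)) * (\<integral>\<^sup>+a. ennreal (exp (l * (\<Sum>d\<in>E. f (a d)))) * indicator (space (iid D)) a \<partial>iid D)"
    using borel_measurable_iid_sum[OF E(1) f] by (intro Chernoff_ineq_nn_integral_ge l) auto
  also have "(\<integral>\<^sup>+a. ennreal (exp (l * (\<Sum>d\<in>E. f (a d)))) * indicator (space (iid D)) a \<partial>iid D)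
      = (\<integral>\<^sup>+a. (\<Prod>d\<in>E. ennreal (exp (l * f (a d)))) \<partial>iid D)"
    by (intro nn_integral_cong) (simp add: sum_distrib_left exp_sum E prod_ennreal)
  also have "\<dots> = (\<Prod>d\<in>E. \<integral>\<^sup>+a. ennreal (exp (l * f (a d))) \<partial>iid D)"
    using E f by (intro P.indep_vars_nn_integral P.indep_vars_subset[OF _ E(1)]
        P.indep_vars_compose2[OF indep_vars_iid_coordinates]) auto
  also have "\<dots> = (\<Prod>d\<in>E. \<integral>\<^sup>+x. ennreal (exp (l * f x)) \<partial>M)"
    using E f by (intro prod.cong refl nn_integral_iid_coordinate) auto
  also have "ennreal (exp (- l * t)) * \<dots> \<le> ennreal (exp (- l * t)) * (\<Prod>d\<in>E. ennreal B)"
    by (intro mult_left_mono prod_mono_ennreal mgf) auto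
  also have "\<dots> = ennreal (exp (- l * t) * B ^ card E)"
    using B by (simp add: prod_ennreal ennreal_mult ennreal_power)
  finally show ?thesis by (simp add: P.emeasure_eq_measure ennreal_le_iff B)
qed

lemma hoeffding_iid_sum:
  assumes E: "E \<subseteq> D" "finite E" "E \<noteq> {}" and g: "g \<in> borel_measurable borel"
    and bounds: "\<And>x. g x \<in> {lo..hi}" "lo < hi" and "\<delta> \<ge> 0"
  shows "measure (iid D) {a \<in> space (iid D).
           \<delta> * real (card E) \<le> \<bar>(\<Sum>d\<in>E. g (a d)) - real (card E) * (\<integral>x. g x \<partial>M)\<bar>}
         \<le> 2 * exp (- 2 * \<delta>\<^sup>2 * real (card E) / (hi - lo)\<^sup>2)"
proof -
  interpret P: prob_space "iid D" by (rule prob_space_iid)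
  interpret H: Hoeffding_ineq "iid D" E "\<lambda>d a. g (a d)" "\<lambda>_. lo" "\<lambda>_. hi"
    "\<Sum>d\<in>E. P.expectation (\<lambda>a. g (a d))"
    using E g bounds
    by unfold_locales (auto intro!: P.indep_vars_subset[OF _ E(1)]
        P.indep_vars_compose2[OF indep_vars_iid_coordinates])
  have "(\<Sum>d\<in>E. P.expectation (\<lambda>a. g (a d))) = card E * (\<integral>x. g x \<partial>M)"
    using E g by (simp add: integral_iid_coordinate subset_iff)
  moreover have "(\<Sum>i\<in>E. (hi - lo)\<^sup>2) > 0" using E bounds by (simp add: card_gt_0_iff)
  ultimately show ?thesis
    using H.Hoeffding_ineq_abs_ge[of "\<delta> * real (card E)"] assms E
    by (simp add: power2_eq_square mult_ac)
qed

lemma hoeffding_iid_union: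
  assumes "finite \<E>" and \<E>: "\<And>E. E \<in> \<E> \<Longrightarrow> E \<subseteq> D \<and> finite E \<and> k \<le> real (card E)" and "k > 0"
    and g: "g \<in> borel_measurable borel" and bounds: "\<And>x. g x \<in> {lo..hi}" "lo < hi" and "\<delta> \<ge> 0"
  shows "measure (iid D) {a \<in> space (iid D). \<exists>E\<in>\<E>.
           \<delta> * real (card E) \<le> \<bar>(\<Sum>d\<in>E. g (a d)) - real (card E) * (\<integral>x. g x \<partial>M)\<bar>}
         \<le> real (card \<E>) * (2 * exp (- 2 * \<delta>\<^sup>2 * k / (hi - lo)\<^sup>2))"
proof -
  interpret P: prob_space "iid D" by (rule prob_space_iid)
  define B where "B E = {a \<in> space (iid D).
    \<delta> * real (card E) \<le> \<bar>(\<Sum>d\<in>E. g (a d)) - real (card E) * (\<integral>x. g x \<partial>M)\<bar>}" for E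
  have "B E \<in> P.events" if "E \<in> \<E>" for E
    using borel_measurable_iid_sum[OF _ g, of E D] \<E>[OF that] unfolding B_def by simp
  moreover have "P.prob (B E) \<le> 2 * exp (- 2 * \<delta>\<^sup>2 * k / (hi - lo)\<^sup>2)" if "E \<in> \<E>" for E
  proof -
    have "E \<noteq> {}" using \<E>[OF that] \<open>k > 0\<close> by auto
    then have "P.prob (B E) \<le> 2 * exp (- 2 * \<delta>\<^sup>2 * real (card E) / (hi - lo)\<^sup>2)"
      unfolding B_def using \<E>[OF that] by (intro hoeffding_iid_sum g bounds \<open>\<delta> \<ge> 0\<close>) auto
    also have "\<dots> \<le> 2 * exp (- 2 * \<delta>\<^sup>2 * k / (hi - lo)\<^sup>2)"
      using \<E>[OF that] \<open>lo < hi\<close> by (simp add: divide_right_mono mult_left_mono)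
    finally show ?thesis .
  qed
  ultimately have "P.prob (\<Union>E\<in>\<E>. B E) \<le> (\<Sum>E\<in>\<E>. 2 * exp (- 2 * \<delta>\<^sup>2 * k / (hi - lo)\<^sup>2))"
    by (intro order_trans[OF P.finite_measure_subadditive_finite[OF \<open>finite \<E>\<close>]] sum_mono) auto
  moreover have "{a \<in> space (iid D). \<exists>E\<in>\<E>.
           \<delta> * real (card E) \<le> \<bar>(\<Sum>d\<in>E. g (a d)) - real (card E) * (\<integral>x. g x \<partial>M)\<bar>} = (\<Union>E\<in>\<E>. B E)"
    by (auto simp: B_def)
  ultimately show ?thesis by simp
qed

abbreviation iid_square :: "nat \<Rightarrow> (nat \<times> nat \<Rightarrow> real) measure" where
  "iid_square n \<equiv> iid ({..<n} \<times> {..<n})"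

lemma sets_large_submatrices_norm_ge:
  "{a \<in> space (iid_square n). large_submatrices_norm_ge \<epsilon> n c a} \<in> sets (iid_square n)"
proof -
  have "{a \<in> space (iid_square n). large_submatrices_norm_ge \<epsilon> n c a}
      = {a \<in> space (iid_square n). \<forall>p\<in>large_index_pairs \<epsilon> n. c \<le> submatrix_opnorm a (fst p) (snd p)}"
    by (auto simp: large_submatrices_norm_ge_def large_index_pairs_def)
  also have "\<dots> \<in> sets (iid_square n)"
  proof (rule sets.sets_Collect_finite_All[OF _ finite_large_index_pairs])
    fix p assume "p \<in> large_index_pairs \<epsilon> n"
    then have "fst p \<subseteq> {..<n}" "snd p \<subseteq> {..<n}" by (auto simp: large_index_pairs_def)
    then have "(\<lambda>a. submatrix_opnorm a (fst p) (snd p)) \<in> borel_measurable (iid_square n)"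
      by (intro borel_measurable_submatrix_opnorm borel_measurable_iid_coordinate)
         (auto intro: finite_subset)
    then show "{a \<in> space (iid_square n). c \<le> submatrix_opnorm a (fst p) (snd p)} \<in> sets (iid_square n)"
      by measurable
  qed
  finally show ?thesis .
qed

lemma prob_large_submatrices_norm_ge_ge:
  assumes "B \<in> sets (iid_square n)" "measure (iid_square n) B \<le> r"
    and "\<And>a. a \<in> space (iid_square n) \<Longrightarrow> \<not> large_submatrices_norm_ge \<epsilon> n c a \<Longrightarrow> a \<in> B"
  shows "1 - r \<le> measure (iid_square n) {a \<in> space (iid_square n). large_submatrices_norm_ge \<epsilon> n c a}"
proof -
  interpret P: prob_space "iid_square n" by (rule prob_space_iid)
  have "P.prob {a \<in> space (iid_square n). \<not> large_submatrices_norm_ge \<epsilon> n c a} \<le> P.prob B"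
    using assms by (intro P.finite_measure_mono) auto
  then show ?thesis using P.prob_neg[OF sets_large_submatrices_norm_ge] assms(2) by simp
qed

lemma sets_exists_large_block_deviation:
  fixes g :: "real \<Rightarrow> real"
  assumes "g \<in> borel_measurable borel"
  shows "{a \<in> space (iid_square n). \<exists>E\<in>large_blocks \<epsilon> n. c E \<le> \<bar>(\<Sum>d\<in>E. g (a d)) - f E\<bar>}
           \<in> sets (iid_square n)"
proof (intro sets.sets_Collect_finite_Ex finite_large_blocks)
  fix E assume "E \<in> large_blocks \<epsilon> n"
  then show "{a \<in> space (iid_square n). c E \<le> \<bar>(\<Sum>d\<in>E. g (a d)) - f E\<bar>} \<in> sets (iid_square n)"
    using borel_measurable_iid_sum[OF large_block_subset assms] by simp
qed

lemma eventually_prob_large_block_deviation_le: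
  fixes g :: "real \<Rightarrow> real"
  assumes g: "g \<in> borel_measurable borel" and bounds: "\<And>x. g x \<in> {lo..hi}" "lo < hi"
    and "\<delta> > 0" "\<epsilon> < 1"
  shows "\<forall>\<^sub>F n in sequentially. measure (iid_square n) {a \<in> space (iid_square n). \<exists>E\<in>large_blocks \<epsilon> n.
           \<delta> * real (card E) \<le> \<bar>(\<Sum>d\<in>E. g (a d)) - real (card E) * (\<integral>x. g x \<partial>M)\<bar>}
         \<le> exp (- real n) / 2"
proof -
  define c where "c = 2 * \<delta>\<^sup>2 * (1 - \<epsilon>)\<^sup>2 / (hi - lo)\<^sup>2"
  have "c > 0" using assms by (simp add: c_def)
  have bound: "measure (iid_square n) {a \<in> space (iid_square n). \<exists>E\<in>large_blocks \<epsilon> n.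
           \<delta> * real (card E) \<le> \<bar>(\<Sum>d\<in>E. g (a d)) - real (card E) * (\<integral>x. g x \<partial>M)\<bar>}
         \<le> 4 ^ n * (2 * exp (- c * (real n)\<^sup>2))" if "n > 0" for n
  proof -
    have "E \<subseteq> {..<n} \<times> {..<n} \<and> finite E \<and> (1 - \<epsilon>)\<^sup>2 * (real n)\<^sup>2 \<le> real (card E)"
      if "E \<in> large_blocks \<epsilon> n" for E
      using large_block_subset[OF that] card_large_block_ge[OF that \<open>\<epsilon> < 1\<close>]
        finite_subset[of E "{..<n} \<times> {..<n}"] by blast
    moreover have "(1 - \<epsilon>)\<^sup>2 * (real n)\<^sup>2 > 0" using \<open>\<epsilon> < 1\<close> that by simp
    ultimately have "measure (iid_square n) {a \<in> space (iid_square n). \<exists>E\<in>large_blocks \<epsilon> n.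
           \<delta> * real (card E) \<le> \<bar>(\<Sum>d\<in>E. g (a d)) - real (card E) * (\<integral>x. g x \<partial>M)\<bar>}
        \<le> real (card (large_blocks \<epsilon> n)) * (2 * exp (- 2 * \<delta>\<^sup>2 * ((1 - \<epsilon>)\<^sup>2 * (real n)\<^sup>2) / (hi - lo)\<^sup>2))"
      using \<open>\<delta> > 0\<close> by (intro hoeffding_iid_union[OF finite_large_blocks _ _ g bounds]) auto
    also have "\<dots> = real (card (large_blocks \<epsilon> n)) * (2 * exp (- c * (real n)\<^sup>2))"
      by (simp add: c_def)
    also have "\<dots> \<le> 4 ^ n * (2 * exp (- c * (real n)\<^sup>2))"
      by (intro mult_right_mono card_large_blocks_le) simp
    finally show ?thesis .
  qed
  have "\<forall>\<^sub>F n in sequentially. 4 ^ n * (2 * exp (- c * (real n)\<^sup>2)) \<le> exp (- real n) / 2"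
    using \<open>c > 0\<close> by real_asymp
  then show ?thesis
    using eventually_gt_at_top[of 0] by eventually_elim (blast intro: order_trans[OF bound])
qed

end

section \<open>Infinite second moment\<close>

context real_distribution
begin

lemma unbounded_truncated_second_moment:
  assumes "\<not> integrable M (\<lambda>x. x\<^sup>2)"
  shows "\<exists>T>0. C \<le> (\<integral>x. min (x\<^sup>2) T \<partial>M)"
proof (rule ccontr)
  assume "\<not> ?thesis"
  then have bounded: "(\<integral>x. min (x\<^sup>2) T \<partial>M) < C" if "T > 0" for T using that by force
  define f where "f = (\<lambda>k x. ennreal (min (x\<^sup>2) (real (Suc k))))"
  have "incseq f" unfolding f_def incseq_def le_fun_def by (auto intro!: ennreal_leI)
  moreover have "f k \<in> borel_measurable M" for k unfolding f_def by measurable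
  moreover have "(SUP k. f k x) = ennreal (x\<^sup>2)" for x
  proof (rule antisym)
    show "(SUP k. f k x) \<le> ennreal (x\<^sup>2)" unfolding f_def by (intro SUP_least ennreal_leI) auto
    obtain k :: nat where "x\<^sup>2 \<le> real k" using real_arch_simple by blast
    then have "f k x = ennreal (x\<^sup>2)" unfolding f_def by (simp add: min_def)
    then show "ennreal (x\<^sup>2) \<le> (SUP k. f k x)" by (metis SUP_upper UNIV_I)
  qed
  ultimately have "(\<integral>\<^sup>+x. ennreal (x\<^sup>2) \<partial>M) = (SUP k. integral\<^sup>N M (f k))"
    using nn_integral_monotone_convergence_SUP[of f M] by simp
  also have "\<dots> \<le> ennreal C"
  proof (rule SUP_least)
    fix k
    have "integrable M (\<lambda>x. min (x\<^sup>2) (real (Suc k)))"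
      by (rule integrable_const_bound[where B="real (Suc k)"]) auto
    then have "integral\<^sup>N M (f k) = ennreal (\<integral>x. min (x\<^sup>2) (real (Suc k)) \<partial>M)"
      unfolding f_def by (rule nn_integral_eq_integral) auto
    also have "\<dots> \<le> ennreal C" using bounded[of "real (Suc k)"] by (intro ennreal_leI) auto
    finally show "integral\<^sup>N M (f k) \<le> ennreal C" .
  qed
  finally have "(\<integral>\<^sup>+x. ennreal (norm (x\<^sup>2)) \<partial>M) < \<infinity>" by (simp add: le_less_trans)
  then have "integrable M (\<lambda>x. x\<^sup>2)" by (intro integrableI_bounded) auto
  with assms show False by simp
qed

lemma eventually_large_submatrices_norm_ge_infinite_variance:
  assumes "\<not> integrable M (\<lambda>x. x\<^sup>2)" and \<epsilon>: "\<epsilon> < 1" and "0 < K"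
  shows "\<forall>\<^sub>F n in sequentially. 1 - exp (- real n)
           \<le> measure (iid_square n) {a \<in> space (iid_square n). large_submatrices_norm_ge \<epsilon> n (K * sqrt n) a}"
proof -
  obtain T where T: "T > 0" "K\<^sup>2 / (1 - \<epsilon>) + 1 \<le> (\<integral>x. min (x\<^sup>2) T \<partial>M)"
    using unbounded_truncated_second_moment[OF assms(1)] by blast
  define Y where "Y = (\<lambda>x::real. min (x\<^sup>2) T)"
  define Bad where "Bad n = {a \<in> space (iid_square n). \<exists>E\<in>large_blocks \<epsilon> n.
      1 * real (card E) \<le> \<bar>(\<Sum>d\<in>E. Y (a d)) - real (card E) * (\<integral>x. Y x \<partial>M)\<bar>}" for n
  have Y: "Y \<in> borel_measurable borel" "\<And>x. Y x \<in> {0..T}"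
    using T by (auto simp: Y_def)
  have "\<forall>\<^sub>F n in sequentially. measure (iid_square n) (Bad n) \<le> exp (- real n) / 2"
    unfolding Bad_def using T(1) by (intro eventually_prob_large_block_deviation_le[OF Y _ _ \<epsilon>]) auto
  then show ?thesis
    using eventually_gt_at_top[of 0]
  proof eventually_elim
    case (elim n)
    have failure: "a \<in> Bad n" if a: "a \<in> space (iid_square n)" "\<not> large_submatrices_norm_ge \<epsilon> n (K * sqrt n) a" for a
    proof (rule ccontr)
      assume "a \<notin> Bad n"
      then have "K\<^sup>2 / (1 - \<epsilon>) * real (card E) \<le> (\<Sum>d\<in>E. (a d)\<^sup>2)" if "E \<in> large_blocks \<epsilon> n" for E
      proof -
        have "((\<integral>x. Y x \<partial>M) - 1) * real (card E) \<le> (\<Sum>d\<in>E. Y (a d))"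
          using \<open>a \<notin> Bad n\<close> a(1) that by (auto simp: Bad_def algebra_simps)
        moreover have "K\<^sup>2 / (1 - \<epsilon>) * real (card E) \<le> ((\<integral>x. Y x \<partial>M) - 1) * real (card E)"
          using T(2) by (intro mult_right_mono) (auto simp: Y_def)
        moreover have "(\<Sum>d\<in>E. Y (a d)) \<le> (\<Sum>d\<in>E. (a d)\<^sup>2)" by (intro sum_mono) (simp add: Y_def)
        ultimately show ?thesis by linarith
      qed
      with large_submatrices_norm_ge_of_sum_squares[OF elim(2) \<epsilon>] a(2) \<open>0 < K\<close> show False by auto
    qed
    have "Bad n \<in> sets (iid_square n)"
      unfolding Bad_def by (rule sets_exists_large_block_deviation[OF Y(1)])
    moreover have "measure (iid_square n) (Bad n) \<le> exp (- real n)"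
      using elim(1) measure_nonneg[of "iid_square n" "Bad n"] by linarith
    ultimately show ?case by (rule prob_large_submatrices_norm_ge_ge[OF _ _ failure])
  qed
qed

end

section \<open>Finite second moment and nonzero mean\<close>

context real_distribution
begin

lemma abs_mean_diff_truncation_le:
  assumes int2: "integrable M (\<lambda>x. x\<^sup>2)" and T: "T > 0"
  shows "\<bar>(\<integral>x. x \<partial>M) - (\<integral>x. truncation T x \<partial>M)\<bar> \<le> (\<integral>x. x\<^sup>2 \<partial>M) / T"
proof -
  have int1: "integrable M (\<lambda>x. x)" by (rule square_integrable_imp_integrable) (use int2 in auto)
  have int_trunc: "integrable M (truncation T)"
    by (rule integrable_const_bound[where B=T]) (use T in \<open>auto simp: truncation_def borel_measurable_truncation\<close>)
  have "\<bar>(\<integral>x. x \<partial>M) - (\<integral>x. truncation T x \<partial>M)\<bar> = \<bar>\<integral>x. x - truncation T x \<partial>M\<bar>"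
    using int1 int_trunc by simp
  also have "\<dots> \<le> (\<integral>x. x\<^sup>2 / T \<partial>M)"
    using int1 int2 int_trunc abs_diff_truncation_le_square_div[OF T] by (intro integral_abs_bound_integral) auto
  finally show ?thesis by simp
qed

lemma exists_truncation_level:
  assumes int2: "integrable M (\<lambda>x. x\<^sup>2)" and "\<eta> > 0"
  shows "\<exists>T>0. (\<integral>x. x\<^sup>2 \<partial>M) / T \<le> \<eta> \<and> \<bar>\<integral>x. x \<partial>M\<bar> / 2 \<le> \<bar>\<integral>x. truncation T x \<partial>M\<bar>"
proof -
  define V where "V = (\<integral>x. x\<^sup>2 \<partial>M)"
  define m where "m = (\<integral>x. x \<partial>M)"
  define T where "T = 1 + V / \<eta> + 2 * V / \<bar>m\<bar>"
  have V: "V \<ge> 0" unfolding V_def by (intro integral_nonneg_AE) auto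
  have T: "T > 0" "V / \<eta> \<le> T" "2 * V / \<bar>m\<bar> \<le> T"
    using V \<open>\<eta> > 0\<close> by (simp_all add: T_def add_pos_nonneg)
  have "V / T \<le> \<eta>" using T \<open>\<eta> > 0\<close> by (simp add: field_simps)
  moreover have "\<bar>m\<bar> / 2 \<le> \<bar>\<integral>x. truncation T x \<partial>M\<bar>"
  proof (cases "m = 0")
    case False
    then have "V / T \<le> \<bar>m\<bar> / 2" using T by (simp add: field_simps)
    moreover have "\<bar>m - (\<integral>x. truncation T x \<partial>M)\<bar> \<le> V / T"
      unfolding m_def V_def by (rule abs_mean_diff_truncation_le[OF int2 T(1)])
    ultimately show ?thesis using abs_triangle_ineq2[of m "\<integral>x. truncation T x \<partial>M"] by linarith
  qed simp
  ultimately show ?thesis using T(1) by (auto simp: V_def m_def)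
qed

lemma mgf_midrange_abs_le:
  assumes L: "L > 0" and T: "T > 0" and int2: "integrable M (\<lambda>x. x\<^sup>2)"
  shows "(\<integral>\<^sup>+x. ennreal (exp (1 / L * midrange_abs T L x)) \<partial>M)
           \<le> ennreal (exp ((1 / (T * L) + 1 / L\<^sup>2) * (\<integral>x. x\<^sup>2 \<partial>M)))"
proof -
  define c where "c = 1 / (T * L) + 1 / L\<^sup>2"
  have c: "c \<ge> 0" using L T by (simp add: c_def)
  have pointwise: "exp (1 / L * midrange_abs T L x) \<le> 1 + c * x\<^sup>2" for x
  proof -
    define u where "u = 1 / L * midrange_abs T L x"
    have "midrange_abs T L x \<le> L" using L by (auto simp: midrange_abs_def)
    then have u: "0 \<le> u" "u \<le> 1" using L by (simp_all add: u_def midrange_abs_nonneg)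
    have "u \<le> 1 / L * (x\<^sup>2 / T)"
      unfolding u_def using L midrange_abs_le_square_div[OF T] by (intro mult_left_mono) auto
    moreover have "u\<^sup>2 \<le> (1 / L)\<^sup>2 * x\<^sup>2"
    proof -
      have "(midrange_abs T L x)\<^sup>2 \<le> \<bar>x\<bar>\<^sup>2"
        by (intro power_mono midrange_abs_nonneg) (simp add: midrange_abs_def)
      then show ?thesis unfolding u_def power_mult_distrib by (intro mult_left_mono) auto
    qed
    moreover have "c * x\<^sup>2 = 1 / L * (x\<^sup>2 / T) + (1 / L)\<^sup>2 * x\<^sup>2"
      by (simp add: c_def power2_eq_square algebra_simps)
    ultimately have "1 + u + u\<^sup>2 \<le> 1 + c * x\<^sup>2" by linarith
    with exp_bound[OF u] show ?thesis by (simp add: u_def)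
  qed
  have "(\<integral>\<^sup>+x. ennreal (exp (1 / L * midrange_abs T L x)) \<partial>M) \<le> (\<integral>\<^sup>+x. ennreal (1 + c * x\<^sup>2) \<partial>M)"
    by (intro nn_integral_mono ennreal_leI pointwise)
  also have "\<dots> = ennreal (\<integral>x. 1 + c * x\<^sup>2 \<partial>M)"
    using int2 c by (intro nn_integral_eq_integral) auto
  also have "(\<integral>x. 1 + c * x\<^sup>2 \<partial>M) = 1 + c * (\<integral>x. x\<^sup>2 \<partial>M)"
    using int2 prob_space by simp
  also have "ennreal (1 + c * (\<integral>x. x\<^sup>2 \<partial>M)) \<le> ennreal (exp (c * (\<integral>x. x\<^sup>2 \<partial>M)))"
    by (intro ennreal_leI) simp
  finally show ?thesis by (simp add: c_def)
qed

lemma prob_midrange_sum_ge_le: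
  assumes T: "T > 0" and int2: "integrable M (\<lambda>x. x\<^sup>2)" and K: "K > 0" and "n > 0"
  shows "measure (iid_square n) {a \<in> space (iid_square n).
           \<delta> * (real n)\<^sup>2 \<le> (\<Sum>d\<in>{..<n} \<times> {..<n}. midrange_abs T (K * sqrt n) (a d))}
         \<le> exp ((real n * sqrt n / K) * ((\<integral>x. x\<^sup>2 \<partial>M) / T - \<delta>) + (\<integral>x. x\<^sup>2 \<partial>M) / K\<^sup>2 * real n)"
proof -
  define V where "V = (\<integral>x. x\<^sup>2 \<partial>M)"
  define s where "s = sqrt n"
  have s: "s > 0" "s\<^sup>2 = real n" using \<open>n > 0\<close> by (simp_all add: s_def)
  define L where "L = K * s"
  have L: "L > 0" using K s by (simp add: L_def)
  have "measure (iid_square n) {a \<in> space (iid_square n).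
         \<delta> * (real n)\<^sup>2 \<le> (\<Sum>d\<in>{..<n} \<times> {..<n}. midrange_abs T L (a d))}
      \<le> exp (- (1 / L) * (\<delta> * (real n)\<^sup>2)) * exp ((1 / (T * L) + 1 / L\<^sup>2) * V) ^ card ({..<n} \<times> {..<n})"
    using L by (intro chernoff_iid_sum borel_measurable_midrange_abs mgf_midrange_abs_le[OF L T int2, folded V_def])
      auto
  also have "exp ((1 / (T * L) + 1 / L\<^sup>2) * V) ^ card ({..<n} \<times> {..<n})
      = exp ((real n)\<^sup>2 * ((1 / (T * L) + 1 / L\<^sup>2) * V))"
    by (simp add: card_cartesian_product power2_eq_square exp_of_nat_mult[symmetric])
  also have "exp (- (1 / L) * (\<delta> * (real n)\<^sup>2)) * \<dots>
      = exp ((real n * s / K) * (V / T - \<delta>) + V / K\<^sup>2 * real n)"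
  proof -
    have "- (1 / L) * (\<delta> * (real n)\<^sup>2) + (real n)\<^sup>2 * ((1 / (T * L) + 1 / L\<^sup>2) * V)
        = (real n * s / K) * (V / T - \<delta>) + V / K\<^sup>2 * real n"
      using s K T unfolding L_def s(2)[symmetric] by (simp add: field_simps power2_eq_square)
    then show ?thesis by (simp add: mult_exp_exp)
  qed
  finally show ?thesis by (simp add: L_def s_def V_def)
qed

lemma eventually_prob_midrange_sum_le:
  assumes T: "T > 0" and int2: "integrable M (\<lambda>x. x\<^sup>2)" and \<delta>: "\<delta> > 0" and K: "K > 0"
    and VT: "(\<integral>x. x\<^sup>2 \<partial>M) / T \<le> \<delta> / 2"
  shows "\<forall>\<^sub>F n in sequentially. measure (iid_square n) {a \<in> space (iid_square n).
           \<delta> * (real n)\<^sup>2 \<le> (\<Sum>d\<in>{..<n} \<times> {..<n}. midrange_abs T (K * sqrt n) (a d))} \<le> exp (- real n) / 2"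
proof -
  define V where "V = (\<integral>x. x\<^sup>2 \<partial>M)"
  define c where "c = \<delta> / (2 * K)"
  have "(real n * sqrt n / K) * (V / T - \<delta>) \<le> - c * (real n * sqrt n)" for n
  proof -
    have "V / T - \<delta> \<le> - \<delta> / 2" using VT unfolding V_def by linarith
    then have "(real n * sqrt n / K) * (V / T - \<delta>) \<le> (real n * sqrt n / K) * (- \<delta> / 2)"
      using K by (intro mult_left_mono) auto
    then show ?thesis by (simp add: c_def mult_ac)
  qed
  then have bound: "measure (iid_square n) {a \<in> space (iid_square n).
           \<delta> * (real n)\<^sup>2 \<le> (\<Sum>d\<in>{..<n} \<times> {..<n}. midrange_abs T (K * sqrt n) (a d))}
         \<le> exp (- c * (real n * sqrt n) + V / K\<^sup>2 * real n)" if "n > 0" for n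
    using prob_midrange_sum_ge_le[OF T int2 K that, of \<delta>] unfolding V_def
    by (smt (verit, best) exp_le_cancel_iff)
  have "c > 0" using \<delta> K by (simp add: c_def)
  then have "\<forall>\<^sub>F n in sequentially. exp (- c * (real n * sqrt n) + V / K\<^sup>2 * real n) \<le> exp (- real n) / 2"
    by real_asymp
  then show ?thesis
    using eventually_gt_at_top[of 0] by eventually_elim (blast intro: order_trans[OF bound])
qed

lemma eventually_large_submatrices_norm_ge_nonzero_mean:
  assumes int2: "integrable M (\<lambda>x. x\<^sup>2)" and "(\<integral>x. x \<partial>M) \<noteq> 0" and \<epsilon>: "\<epsilon> < 1" and K: "0 < K"
  shows "\<forall>\<^sub>F n in sequentially. 1 - exp (- real n)
           \<le> measure (iid_square n) {a \<in> space (iid_square n). large_submatrices_norm_ge \<epsilon> n (K * sqrt n) a}"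
proof -
  define \<delta> where "\<delta> = \<bar>\<integral>x. x \<partial>M\<bar> * (1 - \<epsilon>)\<^sup>2 / 8"
  have \<delta>: "\<delta> > 0" using assms(2) \<epsilon> by (simp add: \<delta>_def)
  then obtain T where T: "T > 0" "(\<integral>x. x\<^sup>2 \<partial>M) / T \<le> \<delta> / 2"
      and "\<bar>\<integral>x. x \<partial>M\<bar> / 2 \<le> \<bar>\<integral>x. truncation T x \<partial>M\<bar>"
    using exists_truncation_level[OF int2, of "\<delta> / 2"] by auto
  define mT where "mT = (\<integral>x. truncation T x \<partial>M)"
  have mT: "4 * \<delta> \<le> \<bar>mT\<bar> * (1 - \<epsilon>)\<^sup>2"
    using mult_right_mono[OF \<open>\<bar>\<integral>x. x \<partial>M\<bar> / 2 \<le> _\<close>, of "(1 - \<epsilon>)\<^sup>2"] by (simp add: \<delta>_def mT_def)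
  define Bad1 where "Bad1 n = {a \<in> space (iid_square n). \<exists>E\<in>large_blocks \<epsilon> n.
      \<delta> * real (card E) \<le> \<bar>(\<Sum>d\<in>E. truncation T (a d)) - real (card E) * mT\<bar>}" for n
  define Bad2 where "Bad2 n = {a \<in> space (iid_square n).
      \<delta> * (real n)\<^sup>2 \<le> (\<Sum>d\<in>{..<n} \<times> {..<n}. midrange_abs T (K * sqrt n) (a d))}" for n
  have truncation_bounds: "\<And>x. truncation T x \<in> {- T..T}" using T(1) by (auto simp: truncation_def abs_le_iff)
  have "\<forall>\<^sub>F n in sequentially. measure (iid_square n) (Bad1 n) \<le> exp (- real n) / 2"
    unfolding Bad1_def mT_def using T(1)
    by (intro eventually_prob_large_block_deviation_le[OF borel_measurable_truncation truncation_bounds _ \<delta> \<epsilon>]) auto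
  moreover have "\<forall>\<^sub>F n in sequentially. measure (iid_square n) (Bad2 n) \<le> exp (- real n) / 2"
    unfolding Bad2_def using T int2 \<delta> K by (intro eventually_prob_midrange_sum_le) auto
  moreover have "\<forall>\<^sub>F n in sequentially. K \<le> 2 * \<delta> * sqrt n"
    using \<delta> by real_asymp
  ultimately show ?thesis
    using eventually_gt_at_top[of 0]
  proof eventually_elim
    case (elim n)
    have failure: "a \<in> Bad1 n \<union> Bad2 n"
      if "a \<in> space (iid_square n)" "\<not> large_submatrices_norm_ge \<epsilon> n (K * sqrt n) a" for a
      using large_submatrices_norm_ge_of_truncation[OF elim(4) \<epsilon> \<delta> mT elim(3), of T a] that
      by (force simp: Bad1_def Bad2_def not_le)
    have "Bad1 n \<in> sets (iid_square n)"
      unfolding Bad1_def by (rule sets_exists_large_block_deviation[OF borel_measurable_truncation])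
    moreover have "Bad2 n \<in> sets (iid_square n)"
      unfolding Bad2_def by (rule borel_measurable_le[OF borel_measurable_const
          borel_measurable_iid_sum[OF subset_refl borel_measurable_midrange_abs]])
    ultimately have "measure (iid_square n) (Bad1 n \<union> Bad2 n) \<le> exp (- real n)"
      using measure_Un_le[of "Bad1 n" "iid_square n" "Bad2 n"] elim(1,2) by simp
    with \<open>Bad1 n \<in> sets (iid_square n)\<close> \<open>Bad2 n \<in> sets (iid_square n)\<close> show ?case
      by (intro prob_large_submatrices_norm_ge_ge[OF _ _ failure]) auto
  qed
qed

end

theorem mainTheorem18:
  fixes \<mu> :: "real measure" and \<epsilon> K :: real
  assumes "prob_space \<mu>" and "sets \<mu> = sets borel"
    and "\<not> integrable \<mu> (\<lambda>x. x\<^sup>2) \<or>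
         (integrable \<mu> (\<lambda>x. x\<^sup>2) \<and> (\<integral>x. x \<partial>\<mu>) \<noteq> 0)"
    and "0 < \<epsilon>" and "\<epsilon> < 1" and "0 < K"
  shows "\<exists>n0::nat. \<forall>n>n0.
           measure (iid_matrix \<mu> n)
             {a \<in> space (iid_matrix \<mu> n).
                \<forall>I J. I \<subseteq> {..<n} \<and> J \<subseteq> {..<n} \<and>
                      real (card I) \<ge> (1 - \<epsilon>) * real n \<and> real (card J) \<ge> (1 - \<epsilon>) * real n
                      \<longrightarrow> submatrix_opnorm a I J \<ge> K * sqrt (real n)}
           \<ge> 1 - exp (- real n)"
proof -
  interpret real_distribution \<mu>
    using assms(1,2) by (simp add: real_distribution_def real_distribution_axioms_def)
  have "\<forall>\<^sub>F n in sequentially. 1 - exp (- real n)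
          \<le> measure (iid_square n) {a \<in> space (iid_square n). large_submatrices_norm_ge \<epsilon> n (K * sqrt n) a}"
    using assms(3) eventually_large_submatrices_norm_ge_infinite_variance[OF _ assms(5,6)]
      eventually_large_submatrices_norm_ge_nonzero_mean[OF _ _ assms(5,6)] by blast
  then obtain N where "\<forall>n\<ge>N. 1 - exp (- real n)
          \<le> measure (iid_square n) {a \<in> space (iid_square n). large_submatrices_norm_ge \<epsilon> n (K * sqrt n) a}"
    unfolding eventually_sequentially by blast
  then show ?thesis
    unfolding iid_matrix_def large_submatrices_norm_ge_def by (intro exI[of _ N]) auto
qed

end
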